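(* Let $R$ be the binary code $RM(1,5)$ with generator matrix whose rows are $1^{32}$, $1^{16}0^{16}$, $(1^80^8)^2$, $(1^40^4)^4$, $(1^20^2)^8$, $(10)^{16}$ (coordinates numbered $1,\ldots,32$), and let $v\in\mathbb{F}_2^{32}$ have support $\{1,2,3,4,5,9,17,29\}$. Then $N_{32}=\langle R,v\rangle$ is a binary $[32,7]$ code that is doubly even, contains the all-ones vector, and whose dual has minimum weight at least $4$, but no Type~II $\mathbb{Z}_4$-code $C$ with $C^{(1)}=N_{32}$ is extremal.
   Context: A $\mathbb{Z}_4$-code of length $n$ is a $\mathbb{Z}_4$-submodule of $\mathbb{Z}_4^n$; it is self-dual if it equals its dual with respect to $x\cdot y=\sum x_iy_i \pmod 4$. The Euclidean weight of $x$ is $n_1(x)+4n_2(x)+n_3(x)$, $n_\alpha(x)$ being the number of coordinates equal to $\alpha$. A Type~II $\mathbb{Z}_4$-code is a self-dual code all of whose codewords have Euclidean weight divisible by $8$; it is extremal if its minimum Euclidean weight equals $8\lfloor n/24\rfloor+8$ (so $16$ for $n=32$). The residue code is $C^{(1)}=\{c\bmod 2: c\in C\}$. $\langle B,v\rangle$ denotes the binary code generated by $B$ and $v$. A binary code is doubly even if all codeword weights are divisible by $4$. *)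

theory Defs
  imports Main "HOL-Library.Numeral_Type"
begin

text \<open>Vectors of length n are functions on nat supported in the coordinates 1..n.
  Z4 is the type 4 (integers mod 4), F2 is the type 2 (integers mod 2).\<close>

definition vecs :: "nat \<Rightarrow> (nat \<Rightarrow> 'a::zero) set" where
  "vecs n = {x. \<forall>i. i \<notin> {1..n} \<longrightarrow> x i = 0}"

definition z4_code :: "nat \<Rightarrow> (nat \<Rightarrow> 4) set \<Rightarrow> bool" where
  "z4_code n C \<longleftrightarrow> C \<subseteq> vecs n \<and> (\<lambda>i. 0) \<in> C
     \<and> (\<forall>x\<in>C. \<forall>y\<in>C. (\<lambda>i. x i + y i) \<in> C)
     \<and> (\<forall>c x. x \<in> C \<longrightarrow> (\<lambda>i. c * x i) \<in> C)"

definition dotp :: "nat \<Rightarrow> (nat \<Rightarrow> 'a::comm_ring_1) \<Rightarrow> (nat \<Rightarrow> 'a) \<Rightarrow> 'a" where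
  "dotp n x y = (\<Sum>i=1..n. x i * y i)"

definition dual_code :: "nat \<Rightarrow> (nat \<Rightarrow> 'a::comm_ring_1) set \<Rightarrow> (nat \<Rightarrow> 'a) set" where
  "dual_code n C = {y \<in> vecs n. \<forall>x\<in>C. dotp n x y = 0}"

definition self_dual_z4 :: "nat \<Rightarrow> (nat \<Rightarrow> 4) set \<Rightarrow> bool" where
  "self_dual_z4 n C \<longleftrightarrow> z4_code n C \<and> C = dual_code n C"

definition n_count :: "nat \<Rightarrow> (nat \<Rightarrow> 4) \<Rightarrow> 4 \<Rightarrow> nat" where
  "n_count n x a = card {i \<in> {1..n}. x i = a}"

definition eucl_wt :: "nat \<Rightarrow> (nat \<Rightarrow> 4) \<Rightarrow> nat" where
  "eucl_wt n x = n_count n x 1 + 4 * n_count n x 2 + n_count n x 3"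

definition type_II :: "nat \<Rightarrow> (nat \<Rightarrow> 4) set \<Rightarrow> bool" where
  "type_II n C \<longleftrightarrow> self_dual_z4 n C \<and> (\<forall>x\<in>C. 8 dvd eucl_wt n x)"

definition min_eucl_wt :: "nat \<Rightarrow> (nat \<Rightarrow> 4) set \<Rightarrow> nat" where
  "min_eucl_wt n C = Min {eucl_wt n x | x. x \<in> C \<and> x \<noteq> (\<lambda>i. 0)}"

definition extremal_type_II :: "nat \<Rightarrow> (nat \<Rightarrow> 4) set \<Rightarrow> bool" where
  "extremal_type_II n C \<longleftrightarrow> type_II n C \<and> min_eucl_wt n C = 8 * (n div 24) + 8"

definition red2 :: "4 \<Rightarrow> 2" where
  "red2 z = (if z = 1 \<or> z = 3 then 1 else 0)"

definition residue_code :: "(nat \<Rightarrow> 4) set \<Rightarrow> (nat \<Rightarrow> 2) set" where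
  "residue_code C = {(\<lambda>i. red2 (x i)) | x. x \<in> C}"

definition bin_gen :: "(nat \<Rightarrow> 2) set \<Rightarrow> (nat \<Rightarrow> 2) set" where
  "bin_gen G = {(\<lambda>i. \<Sum>g\<in>T. g i) | T. T \<subseteq> G}"

definition ham_wt :: "nat \<Rightarrow> (nat \<Rightarrow> 2) \<Rightarrow> nat" where
  "ham_wt n x = card {i \<in> {1..n}. x i \<noteq> 0}"

definition doubly_even :: "nat \<Rightarrow> (nat \<Rightarrow> 2) set \<Rightarrow> bool" where
  "doubly_even n B \<longleftrightarrow> (\<forall>x\<in>B. 4 dvd ham_wt n x)"

definition ind32 :: "(nat \<Rightarrow> bool) \<Rightarrow> nat \<Rightarrow> 2" where
  "ind32 P i = (if i \<in> {1..32} \<and> P i then 1 else 0)"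

definition RM15_gens :: "(nat \<Rightarrow> 2) set" where
  "RM15_gens = {ind32 (\<lambda>i. True),
                ind32 (\<lambda>i. i \<le> 16),
                ind32 (\<lambda>i. even ((i - 1) div 8)),
                ind32 (\<lambda>i. even ((i - 1) div 4)),
                ind32 (\<lambda>i. even ((i - 1) div 2)),
                ind32 (\<lambda>i. even (i - 1))}"

definition RM15 :: "(nat \<Rightarrow> 2) set" where
  "RM15 = bin_gen RM15_gens"

definition v32 :: "nat \<Rightarrow> 2" where
  "v32 = ind32 (\<lambda>i. i \<in> {1,2,3,4,5,9,17,29})"

definition N32 :: "(nat \<Rightarrow> 2) set" where
  "N32 = bin_gen (RM15 \<union> {v32})"

end

theory Submission
  imports Defs
begin

(*
  The binary part is a finite computation organised by general
  facts about the span bin_gen G of a finite set G of binary vectors: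
  adding a generator that is not orthogonal to some vector orthogonal to
  the old ones doubles the span (giving |N32| = 2^7), and a span of
  pairwise orthogonal doubly-even vectors is doubly even.  The dual distance
  of N32 is at least 4: dual words are even (orthogonal to the all-ones
  word) and a weight-2 dual word would have a support {i,j} on which every
  row of RM(1,5) is constant, but these rows separate all coordinates.

  For the Z4 part, let C be Type II with residue N32.  If w is a binary word
  orthogonal to N32, then 2w lies in C (self-duality).  Lift v32 to some
  x in C; for every coordinate j outside supp(v32) and 6 there is such a w
  with w_j = 1 vanishing on the other such coordinates, so adding suitable
  words 2w clears all of them.  The result is a nonzero codeword of
  Euclidean weight at most wt(v32) + 4 = 12 < 16, so C is not extremal.
*)

lemma bit_cases: "(x::2) = 0 \<or> x = 1"
proof (cases x)
  case (of_int z) hence "z = 0 \<or> z = 1" by simp arith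
  thus ?thesis using of_int by auto
qed

lemma z4_cases: "(x::4) = 0 \<or> x = 1 \<or> x = 2 \<or> x = 3"
proof (cases x)
  case (of_int z) hence "z = 0 \<or> z = 1 \<or> z = 2 \<or> z = 3" by simp arith
  thus ?thesis using of_int by auto
qed

lemma bit_add_self [simp]: "(x::2) + x = 0"
  using bit_cases[of x] by auto

lemma of_nat_2_eq_0: "(of_nat n :: 2) = 0 \<longleftrightarrow> even n"
  by (simp add: of_nat_eq_0_iff_char_dvd)

lemma of_nat_4_eq_0: "(of_nat n :: 4) = 0 \<longleftrightarrow> 4 dvd n"
  by (simp add: of_nat_eq_0_iff_char_dvd)

lemma red2_simps [simp]: "red2 0 = 0" "red2 1 = 1" "red2 2 = 0" "red2 3 = 1"
  unfolding red2_def by simp_all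

lemma red2_eq_0_iff: "red2 z = 0 \<longleftrightarrow> z = 0 \<or> z = 2"
  using z4_cases[of z] by auto

section \<open>Binary spans\<close>

lemma sum_symdiff_2:
  fixes f :: "'a \<Rightarrow> 2"
  assumes "finite A" "finite B"
  shows "(\<Sum>a\<in>A. f a) + (\<Sum>a\<in>B. f a) = (\<Sum>a\<in>(A - B) \<union> (B - A). f a)"
proof -
  have "(\<Sum>a\<in>A. f a) = (\<Sum>a\<in>A - B. f a) + (\<Sum>a\<in>A \<inter> B. f a)"
    using assms by (simp add: sum.Int_Diff[of A _ B] add.commute)
  moreover have "(\<Sum>a\<in>B. f a) = (\<Sum>a\<in>B - A. f a) + (\<Sum>a\<in>A \<inter> B. f a)"
    using assms by (simp add: sum.Int_Diff[of B _ A] add.commute inf_commute)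
  moreover have "(\<Sum>a\<in>(A - B) \<union> (B - A). f a) = (\<Sum>a\<in>A - B. f a) + (\<Sum>a\<in>B - A. f a)"
    using assms by (intro sum.union_disjoint) auto
  moreover have "(p + r) + (q + r) = p + q" for p q r :: 2
    by (metis add.assoc add.commute add.right_neutral bit_add_self)
  ultimately show ?thesis by simp
qed

lemma bin_gen_zero: "(\<lambda>i. 0) \<in> bin_gen G"
  unfolding bin_gen_def by (rule CollectI, rule exI[of _ "{}"]) simp

lemma bin_gen_mem: "g \<in> G \<Longrightarrow> g \<in> bin_gen G"
  unfolding bin_gen_def by (rule CollectI, rule exI[of _ "{g}"]) simp

lemma bin_gen_add:
  assumes "finite G" "x \<in> bin_gen G" "y \<in> bin_gen G"
  shows "(\<lambda>i. x i + y i) \<in> bin_gen G"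
proof -
  obtain T1 where T1: "T1 \<subseteq> G" "x = (\<lambda>i. \<Sum>g\<in>T1. g i)"
    using assms(2) unfolding bin_gen_def by auto
  obtain T2 where T2: "T2 \<subseteq> G" "y = (\<lambda>i. \<Sum>g\<in>T2. g i)"
    using assms(3) unfolding bin_gen_def by auto
  have "finite T1" "finite T2" using T1 T2 assms(1) finite_subset by auto
  hence "(\<lambda>i. x i + y i) = (\<lambda>i. \<Sum>g\<in>(T1 - T2) \<union> (T2 - T1). g i)"
    unfolding T1(2) T2(2) by (simp add: sum_symdiff_2)
  moreover have "(T1 - T2) \<union> (T2 - T1) \<subseteq> G" using T1 T2 by auto
  ultimately show ?thesis unfolding bin_gen_def by blast
qed

lemma bin_gen_least:
  assumes "(\<lambda>i. 0) \<in> A" "G \<subseteq> A" "\<And>x y. x \<in> A \<Longrightarrow> y \<in> A \<Longrightarrow> (\<lambda>i. x i + y i) \<in> A"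
  shows "bin_gen G \<subseteq> A"
proof
  fix x assume "x \<in> bin_gen G"
  then obtain T where T: "T \<subseteq> G" "x = (\<lambda>i. \<Sum>g\<in>T. g i)" unfolding bin_gen_def by auto
  show "x \<in> A"
  proof (cases "finite T")
    case False thus ?thesis using T assms(1) by simp
  next
    case True
    have "(\<lambda>i. \<Sum>g\<in>T. g i) \<in> A" using True T(1)
    proof (induction T rule: finite_induct)
      case empty thus ?case using assms(1) by simp
    next
      case (insert g F)
      have "(\<lambda>i. g i + (\<Sum>g\<in>F. g i)) \<in> A" using insert assms by auto
      thus ?case using insert by simp
    qed
    thus ?thesis using T by simp
  qed
qed

lemma finite_bin_gen: "finite G \<Longrightarrow> finite (bin_gen G)"
proof -
  assume "finite G"
  have "bin_gen G = (\<lambda>T i. \<Sum>g\<in>T. g i) ` Pow G" unfolding bin_gen_def by auto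
  thus ?thesis using \<open>finite G\<close> by simp
qed

lemma bin_gen_mono: "G \<subseteq> H \<Longrightarrow> bin_gen G \<subseteq> bin_gen H"
  unfolding bin_gen_def by blast

lemma bin_gen_empty: "bin_gen {} = {\<lambda>i. 0}"
  unfolding bin_gen_def by auto

lemma bin_gen_insert:
  assumes "finite G"
  shows "bin_gen (insert g G) = bin_gen G \<union> (\<lambda>x i. g i + x i) ` bin_gen G"
proof
  show "bin_gen (insert g G) \<subseteq> bin_gen G \<union> (\<lambda>x i. g i + x i) ` bin_gen G"
  proof
    fix x assume "x \<in> bin_gen (insert g G)"
    then obtain T where T: "T \<subseteq> insert g G" "x = (\<lambda>i. \<Sum>g\<in>T. g i)"
      unfolding bin_gen_def by auto
    show "x \<in> bin_gen G \<union> (\<lambda>x i. g i + x i) ` bin_gen G"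
    proof (cases "g \<in> T")
      case False
      hence "T \<subseteq> G" using T by auto
      thus ?thesis using T unfolding bin_gen_def by auto
    next
      case True
      have "T - {g} \<subseteq> G" using T by auto
      hence "(\<lambda>i. \<Sum>g\<in>T - {g}. g i) \<in> bin_gen G" unfolding bin_gen_def by auto
      moreover have "finite T" using T(1) assms finite_subset by auto
      hence "x = (\<lambda>i. g i + (\<Sum>g\<in>T - {g}. g i))" using T(2) True by (simp add: sum.remove)
      ultimately show ?thesis by auto
    qed
  qed
next
  have fin: "finite (insert g G)" using assms by simp
  have old: "bin_gen G \<subseteq> bin_gen (insert g G)" by (rule bin_gen_mono) auto
  moreover have "g \<in> bin_gen (insert g G)" by (rule bin_gen_mem) simp
  hence "(\<lambda>x i. g i + x i) ` bin_gen G \<subseteq> bin_gen (insert g G)"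
    using bin_gen_add[OF fin] old by auto
  ultimately show "bin_gen G \<union> (\<lambda>x i. g i + x i) ` bin_gen G \<subseteq> bin_gen (insert g G)"
    by blast
qed

lemma card_bin_gen_insert:
  assumes "finite G" "g \<notin> bin_gen G"
  shows "card (bin_gen (insert g G)) = 2 * card (bin_gen G)"
proof -
  have inj: "inj_on (\<lambda>x i. g i + x i) (bin_gen G)"
    by (rule inj_onI) (auto simp: fun_eq_iff)
  have "bin_gen G \<inter> (\<lambda>x i. g i + x i) ` bin_gen G = {}"
  proof (rule ccontr)
    assume "bin_gen G \<inter> (\<lambda>x i. g i + x i) ` bin_gen G \<noteq> {}"
    then obtain x y where xy: "x \<in> bin_gen G" "y \<in> bin_gen G" "y = (\<lambda>i. g i + x i)" by auto
    have "(\<lambda>i. y i + x i) \<in> bin_gen G" using bin_gen_add[OF assms(1) xy(2) xy(1)] .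
    moreover have "(\<lambda>i. y i + x i) = g" using xy(3) by (auto simp: fun_eq_iff add.assoc)
    ultimately show False using assms(2) by simp
  qed
  hence "card (bin_gen (insert g G)) = card (bin_gen G) + card ((\<lambda>x i. g i + x i) ` bin_gen G)"
    unfolding bin_gen_insert[OF assms(1)] using finite_bin_gen[OF assms(1)]
    by (intro card_Un_disjoint) auto
  thus ?thesis using card_image[OF inj] by simp
qed

lemma bin_gen_span_insert:
  assumes "finite G"
  shows "bin_gen (bin_gen G \<union> {v}) = bin_gen (insert v G)"
proof
  have fin: "finite (insert v G)" using assms by simp
  show "bin_gen (bin_gen G \<union> {v}) \<subseteq> bin_gen (insert v G)"
  proof (rule bin_gen_least[OF bin_gen_zero _ bin_gen_add[OF fin]])
    show "bin_gen G \<union> {v} \<subseteq> bin_gen (insert v G)"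
      using bin_gen_mono[of G "insert v G"] bin_gen_mem[of v "insert v G"] by auto
  qed
next
  have fin: "finite (bin_gen G \<union> {v})" using finite_bin_gen[OF assms] by simp
  show "bin_gen (insert v G) \<subseteq> bin_gen (bin_gen G \<union> {v})"
  proof (rule bin_gen_least[OF bin_gen_zero _ bin_gen_add[OF fin]])
    have "insert v G \<subseteq> bin_gen G \<union> {v}" using bin_gen_mem[of _ G] by auto
    thus "insert v G \<subseteq> bin_gen (bin_gen G \<union> {v})" using bin_gen_mem by blast
  qed
qed

section \<open>Inner products and weights of binary vectors\<close>

lemma dotp_sum_left: "dotp n (\<lambda>i. \<Sum>g\<in>T. g i) w = (\<Sum>g\<in>T. dotp n g w)"
  unfolding dotp_def by (simp add: sum_distrib_right sum.swap[of _ T])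

lemma dotp_comm: "dotp n x y = dotp n y x"
  unfolding dotp_def by (simp add: mult.commute)

lemma orth_bin_gen:
  assumes "\<forall>g\<in>G. dotp n g w = 0" "x \<in> bin_gen G"
  shows "dotp n x w = 0"
proof -
  obtain T where T: "T \<subseteq> G" "x = (\<lambda>i. \<Sum>g\<in>T. g i)" using assms(2) unfolding bin_gen_def by auto
  show ?thesis unfolding T(2) dotp_sum_left using T(1) assms(1) by (auto intro!: sum.neutral)
qed

definition supp :: "nat \<Rightarrow> (nat \<Rightarrow> 2) \<Rightarrow> nat set" where
  "supp n x = {i \<in> {1..n}. x i \<noteq> 0}"

lemma ham_wt_supp: "ham_wt n x = card (supp n x)"
  unfolding ham_wt_def supp_def ..

lemma dotp_bin_card: "dotp n x y = of_nat (card (supp n x \<inter> supp n y))"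
proof -
  have "dotp n x y = (\<Sum>i\<in>{1..n}. if i \<in> supp n x \<inter> supp n y then 1 else 0)"
    unfolding dotp_def
  proof (rule sum.cong[OF refl])
    fix i
    show "x i * y i = (if i \<in> supp n x \<inter> supp n y then 1 else 0)" if "i \<in> {1..n}"
      using that bit_cases[of "x i"] bit_cases[of "y i"] unfolding supp_def by auto
  qed
  also have "\<dots> = of_nat (card ({1..n} \<inter> (supp n x \<inter> supp n y)))"
    by (simp add: sum.If_cases Int_def)
  also have "{1..n} \<inter> (supp n x \<inter> supp n y) = supp n x \<inter> supp n y" unfolding supp_def by auto
  finally show ?thesis .
qed

lemma ham_wt_add:
  "ham_wt n (\<lambda>i. x i + y i) + 2 * card (supp n x \<inter> supp n y) = ham_wt n x + ham_wt n y"
proof -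
  let ?A = "supp n x" and ?B = "supp n y"
  have fin: "finite ?A" "finite ?B" unfolding supp_def by auto
  have "x i + y i \<noteq> 0 \<longleftrightarrow> (x i \<noteq> 0 \<and> y i = 0) \<or> (x i = 0 \<and> y i \<noteq> 0)" for i
    using bit_cases[of "x i"] bit_cases[of "y i"] by auto
  hence symdiff: "supp n (\<lambda>i. x i + y i) = (?A \<union> ?B) - (?A \<inter> ?B)" unfolding supp_def by auto
  have "card ((?A \<union> ?B) - (?A \<inter> ?B)) = card (?A \<union> ?B) - card (?A \<inter> ?B)"
    using fin by (intro card_Diff_subset) auto
  moreover have "card (?A \<inter> ?B) \<le> card (?A \<union> ?B)" using fin by (intro card_mono) auto
  moreover have "card (?A \<union> ?B) + card (?A \<inter> ?B) = card ?A + card ?B"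
    using fin card_Un_Int by metis
  ultimately show ?thesis unfolding ham_wt_supp symdiff by linarith
qed

lemma doubly_even_bin_gen:
  assumes fin: "finite G"
    and wt: "\<forall>g\<in>G. 4 dvd ham_wt n g"
    and orth: "\<forall>g\<in>G. \<forall>h\<in>G. dotp n g h = 0"
  shows "doubly_even n (bin_gen G)"
proof -
  have self_orth: "dotp n x y = 0" if "x \<in> bin_gen G" "y \<in> bin_gen G" for x y
  proof -
    have "\<forall>g\<in>G. dotp n g y = 0"
      using orth_bin_gen[of G n _ y] orth that(2) dotp_comm by metis
    thus ?thesis using orth_bin_gen that(1) by blast
  qed
  have "bin_gen G \<subseteq> {x \<in> bin_gen G. 4 dvd ham_wt n x}"
  proof (rule bin_gen_least)
    show "(\<lambda>i. 0) \<in> {x \<in> bin_gen G. 4 dvd ham_wt n x}"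
      using bin_gen_zero by (simp add: ham_wt_def)
    show "G \<subseteq> {x \<in> bin_gen G. 4 dvd ham_wt n x}" using wt bin_gen_mem by auto
  next
    fix x y
    assume x: "x \<in> {x \<in> bin_gen G. 4 dvd ham_wt n x}" and y: "y \<in> {x \<in> bin_gen G. 4 dvd ham_wt n x}"
    have "even (card (supp n x \<inter> supp n y))"
      using self_orth x y by (simp add: dotp_bin_card of_nat_2_eq_0)
    moreover have "4 dvd ham_wt n x" "4 dvd ham_wt n y" using x y by simp_all
    moreover have "4 dvd e" if "e + 2 * c = a + b" "4 dvd a" "4 dvd b" "even c" for e c a b :: nat
      using that by presburger
    ultimately have "4 dvd ham_wt n (\<lambda>i. x i + y i)"
      using ham_wt_add[of n x y] by blast
    thus "(\<lambda>i. x i + y i) \<in> {x \<in> bin_gen G. 4 dvd ham_wt n x}" using bin_gen_add[OF fin] x y by auto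
  qed
  thus ?thesis unfolding doubly_even_def by auto
qed

lemma orth_weight_two:
  assumes "supp n y = {i, j}" "i \<noteq> j" "dotp n x y = 0"
  shows "x i = x j"
proof -
  have ij: "i \<in> {1..n}" "j \<in> {1..n}" using assms(1) unfolding supp_def by auto
  have "even (card (supp n x \<inter> {i, j}))" using assms(1,3) by (simp add: dotp_bin_card of_nat_2_eq_0)
  thus ?thesis
    using ij assms(2) bit_cases[of "x i"] bit_cases[of "x j"] by (auto simp: supp_def)
qed

lemma ind32_vecs: "ind32 P \<in> vecs 32"
  unfolding vecs_def ind32_def by auto

lemma card_filter_upt: "card {i \<in> {1..n}. P i} = length (filter P [1..<Suc n])"
proof -
  have "{i \<in> {1..n}. P i} = set (filter P [1..<Suc n])" unfolding set_filter set_upt by auto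
  moreover have "card (set (filter P [1..<Suc n])) = length (filter P [1..<Suc n])"
    by (rule distinct_card) (simp del: upt_Suc)
  ultimately show ?thesis by simp
qed

lemma supp_ind32: "supp 32 (ind32 P) = {i \<in> {1..32}. P i}"
  unfolding supp_def ind32_def by auto

lemma dotp_ind32: "dotp 32 (ind32 P) (ind32 Q) = of_nat (length (filter (\<lambda>i. P i \<and> Q i) [1..<33]))"
proof -
  have "supp 32 (ind32 P) \<inter> supp 32 (ind32 Q) = {i \<in> {1..32}. P i \<and> Q i}"
    unfolding supp_ind32 by auto
  thus ?thesis unfolding dotp_bin_card using card_filter_upt[of 32] by simp
qed

lemma ham_wt_ind32: "ham_wt 32 (ind32 P) = length (filter P [1..<33])"
  unfolding ham_wt_supp supp_ind32 using card_filter_upt[of 32] by simp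

definition "g0 = ind32 (\<lambda>i. True)"
definition "g1 = ind32 (\<lambda>i. i \<le> 16)"
definition "g2 = ind32 (\<lambda>i. even ((i - 1) div 8))"
definition "g3 = ind32 (\<lambda>i. even ((i - 1) div 4))"
definition "g4 = ind32 (\<lambda>i. even ((i - 1) div 2))"
definition "g5 = ind32 (\<lambda>i. even (i - 1))"

definition N32_gens :: "(nat \<Rightarrow> 2) set" where
  "N32_gens = {v32, g0, g1, g2, g3, g4, g5}"

lemmas generator_eval = g0_def g1_def g2_def g3_def g4_def g5_def v32_def dotp_ind32 ham_wt_ind32

lemma N32_eq: "N32 = bin_gen N32_gens"
proof -
  have gens: "RM15_gens = {g0, g1, g2, g3, g4, g5}"
    unfolding RM15_gens_def g0_def g1_def g2_def g3_def g4_def g5_def ..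
  show ?thesis unfolding N32_def RM15_def N32_gens_def gens by (rule bin_gen_span_insert) simp
qed

lemma N32_gens_in_N32: "g \<in> N32_gens \<Longrightarrow> g \<in> N32"
  unfolding N32_eq by (rule bin_gen_mem)

lemma N32_vecs: "N32 \<subseteq> vecs 32"
  unfolding N32_eq
proof (rule bin_gen_least)
  show "(\<lambda>i. 0) \<in> vecs 32" unfolding vecs_def by simp
  show "N32_gens \<subseteq> vecs 32" unfolding N32_gens_def generator_eval using ind32_vecs by auto
  show "\<And>x y :: nat \<Rightarrow> 2. x \<in> vecs 32 \<Longrightarrow> y \<in> vecs 32 \<Longrightarrow> (\<lambda>i. x i + y i) \<in> vecs 32"
    unfolding vecs_def by auto
qed

lemma card_bin_gen_insert_witness:
  assumes "finite G" "\<forall>g\<in>G. dotp 32 g y = 0" "dotp 32 h y \<noteq> 0"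
  shows "card (bin_gen (insert h G)) = 2 * card (bin_gen G)"
proof -
  have "h \<notin> bin_gen G" using orth_bin_gen[OF assms(2)] assms(3) by blast
  thus ?thesis by (rule card_bin_gen_insert[OF assms(1)])
qed

lemma card_N32: "card N32 = 2 ^ 7"
proof -
  have "card (bin_gen {g5}) = 2"
    using card_bin_gen_insert_witness[of "{}" "ind32 (\<lambda>i. i = 1)" g5]
    by (simp add: generator_eval upt_rec bin_gen_empty)
  hence "card (bin_gen {g4, g5}) = 4"
    using card_bin_gen_insert_witness[of "{g5}" "ind32 (\<lambda>i. i = 2)" g4] by (simp add: generator_eval upt_rec)
  hence "card (bin_gen {g3, g4, g5}) = 8"
    using card_bin_gen_insert_witness[of "{g4, g5}" "ind32 (\<lambda>i. i = 4)" g3] by (simp add: generator_eval upt_rec)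
  hence "card (bin_gen {g2, g3, g4, g5}) = 16"
    using card_bin_gen_insert_witness[of "{g3, g4, g5}" "ind32 (\<lambda>i. i = 8)" g2] by (simp add: generator_eval upt_rec)
  hence "card (bin_gen {g1, g2, g3, g4, g5}) = 32"
    using card_bin_gen_insert_witness[of "{g2, g3, g4, g5}" "ind32 (\<lambda>i. i = 16)" g1] by (simp add: generator_eval upt_rec)
  hence "card (bin_gen {g0, g1, g2, g3, g4, g5}) = 64"
    using card_bin_gen_insert_witness[of "{g1, g2, g3, g4, g5}" "ind32 (\<lambda>i. i = 32)" g0] by (simp add: generator_eval upt_rec)
  hence "card (bin_gen N32_gens) = 128" unfolding N32_gens_def
    using card_bin_gen_insert_witness[of "{g0, g1, g2, g3, g4, g5}" "ind32 (\<lambda>i. i \<in> {1,2,5,6})" v32]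
    by (simp add: generator_eval upt_rec)
  thus ?thesis unfolding N32_eq by simp
qed

lemma doubly_even_N32: "doubly_even 32 N32"
  unfolding N32_eq
proof (rule doubly_even_bin_gen)
  show "finite N32_gens" unfolding N32_gens_def by simp
  show "\<forall>g\<in>N32_gens. 4 dvd ham_wt 32 g" unfolding N32_gens_def by (simp add: generator_eval upt_rec; presburger)
  show "\<forall>g\<in>N32_gens. \<forall>h\<in>N32_gens. dotp 32 g h = 0" unfolding N32_gens_def by (simp add: generator_eval upt_rec)
qed

lemma all_ones_N32: "ind32 (\<lambda>i. True) \<in> N32"
  by (rule N32_gens_in_N32) (simp add: N32_gens_def g0_def)

text \<open>The rows g1..g5 give the binary expansion of i - 1, so they separate coordinates.\<close>
lemma binary_expansion:
  "i \<in> {1..32::nat} \<Longrightarrow> i = 1 + (if i \<le> 16 then 0 else 16) + (if even ((i - 1) div 8) then 0 else 8)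
   + (if even ((i - 1) div 4) then 0 else 4) + (if even ((i - 1) div 2) then 0 else 2)
   + (if even (i - 1) then 0 else 1)"
proof -
  have table: "\<forall>i \<in> set [1..<33]. i = 1 + (if i \<le> 16 then 0 else 16) + (if even ((i - 1) div 8) then 0 else 8)
   + (if even ((i - 1) div 4) then 0 else 4) + (if even ((i - 1) div 2) then 0 else 2)
   + (if even (i - 1) then (0::nat) else 1)"
    by (simp add: upt_rec)
  assume "i \<in> {1..32}"
  hence "i \<in> set [1..<33]" by (simp only: set_upt) auto
  with table show ?thesis by (rule bspec)
qed

lemma RM15_rows_separate:
  assumes "i \<in> {1..32}" "j \<in> {1..32}" "\<forall>g\<in>{g1, g2, g3, g4, g5}. g i = g j"
  shows "i = j"
proof -
  have "P i = P j" if "ind32 P i = ind32 P j" for P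
    using that assms(1,2) unfolding ind32_def by (auto split: if_splits)
  hence "(i \<le> 16) = (j \<le> 16)" "even ((i - 1) div 8) = even ((j - 1) div 8)"
    "even ((i - 1) div 4) = even ((j - 1) div 4)" "even ((i - 1) div 2) = even ((j - 1) div 2)"
    "even (i - 1) = even (j - 1)"
    using assms(3) unfolding g1_def g2_def g3_def g4_def g5_def by blast+
  thus ?thesis by (subst binary_expansion[OF assms(1)], subst binary_expansion[OF assms(2)]) simp
qed

lemma dual_N32_min_wt:
  assumes y: "y \<in> dual_code 32 N32" and nz: "y \<noteq> (\<lambda>i. 0)"
  shows "ham_wt 32 y \<ge> 4"
proof -
  have yv: "y \<in> vecs 32" and orth: "\<forall>x\<in>N32. dotp 32 x y = 0"
    using y unfolding dual_code_def by auto
  have "even (card (supp 32 g0 \<inter> supp 32 y))"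
    using orth N32_gens_in_N32[of g0] by (simp add: N32_gens_def dotp_bin_card of_nat_2_eq_0)
  moreover have "supp 32 g0 \<inter> supp 32 y = supp 32 y"
    unfolding g0_def supp_ind32 by (auto simp: supp_def)
  ultimately have even: "even (ham_wt 32 y)" unfolding ham_wt_supp by simp
  have "supp 32 y \<noteq> {}"
    using yv nz unfolding supp_def vecs_def by (auto simp: fun_eq_iff)
  hence not0: "ham_wt 32 y \<noteq> 0" unfolding ham_wt_supp supp_def by simp
  have not2: "ham_wt 32 y \<noteq> 2"
  proof
    assume "ham_wt 32 y = 2"
    then obtain i j where ij: "supp 32 y = {i, j}" "i \<noteq> j"
      unfolding ham_wt_supp card_2_iff by blast
    have "i \<in> {1..32}" "j \<in> {1..32}" using ij(1) unfolding supp_def by auto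
    moreover have "\<forall>g\<in>{g1, g2, g3, g4, g5}. g i = g j"
      using orth_weight_two[OF ij] orth N32_gens_in_N32 unfolding N32_gens_def by auto
    ultimately show False using RM15_rows_separate ij(2) by blast
  qed
  have "4 \<le> k" if "even k" "k \<noteq> 0" "k \<noteq> 2" for k :: nat using that by presburger
  thus ?thesis using even not0 not2 by blast
qed

section \<open>Self-dual Z4-codes with a given residue code\<close>

definition twice :: "(nat \<Rightarrow> 2) \<Rightarrow> nat \<Rightarrow> 4" where
  "twice w i = (if w i = 1 then 2 else 0)"

lemma red2_add_twice: "red2 (a + twice w i) = red2 a"
  using z4_cases[of a] unfolding twice_def red2_def by auto

lemma dotp_twice: "dotp n x (twice w) = of_nat (card (supp n (\<lambda>i. red2 (x i)) \<inter> supp n w)) * 2"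
proof -
  let ?K = "supp n (\<lambda>i. red2 (x i)) \<inter> supp n w"
  have "dotp n x (twice w) = (\<Sum>i\<in>{1..n}. if i \<in> ?K then 2 else 0)"
    unfolding dotp_def
  proof (rule sum.cong[OF refl])
    fix i assume "i \<in> {1..n}"
    thus "x i * twice w i = (if i \<in> ?K then 2 else 0)"
      using z4_cases[of "x i"] bit_cases[of "w i"] unfolding supp_def twice_def by auto
  qed
  also have "\<dots> = of_nat (card ({1..n} \<inter> ?K)) * 2"
    by (simp add: sum.If_cases Int_def)
  also have "{1..n} \<inter> ?K = ?K" unfolding supp_def by auto
  finally show ?thesis .
qed

lemma twice_dual_in_code:
  assumes sd: "self_dual_z4 n C" and res: "residue_code C \<subseteq> B" and w: "w \<in> dual_code n B"
  shows "twice w \<in> C"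
proof -
  have "twice w \<in> dual_code n C"
    unfolding dual_code_def
  proof (intro CollectI conjI ballI)
    show "twice w \<in> vecs n" using w unfolding dual_code_def vecs_def twice_def by auto
    fix x assume "x \<in> C"
    hence "(\<lambda>i. red2 (x i)) \<in> B" using res unfolding residue_code_def by auto
    hence "dotp n (\<lambda>i. red2 (x i)) w = 0" using w unfolding dual_code_def by auto
    hence "even (card (supp n (\<lambda>i. red2 (x i)) \<inter> supp n w))"
      unfolding dotp_bin_card of_nat_2_eq_0 .
    then obtain m where m: "card (supp n (\<lambda>i. red2 (x i)) \<inter> supp n w) = 2 * m" by (auto elim: evenE)
    have "(of_nat (2 * m) :: 4) * 2 = of_nat (4 * m)" by simp
    also have "\<dots> = 0" unfolding of_nat_4_eq_0 by simp
    finally show "dotp n x (twice w) = 0" unfolding dotp_twice m .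
  qed
  thus ?thesis using sd unfolding self_dual_z4_def by simp
qed

lemma clear_coordinates:
  assumes sd: "self_dual_z4 n C" and res: "residue_code C \<subseteq> B"
  shows "finite J \<Longrightarrow> \<forall>j\<in>J. \<exists>w\<in>dual_code n B. w j = 1 \<and> (\<forall>k\<in>J. k \<noteq> j \<longrightarrow> w k = 0)
    \<Longrightarrow> y \<in> C \<Longrightarrow> \<forall>j\<in>J. red2 (y j) = 0
    \<Longrightarrow> \<exists>y'\<in>C. (\<forall>i. red2 (y' i) = red2 (y i)) \<and> (\<forall>j\<in>J. y' j = 0)"
proof (induction J rule: finite_induct)
  case empty thus ?case by blast
next
  case (insert j F)
  note clearing = insert.prems(1)
  have "\<forall>j'\<in>F. \<exists>w\<in>dual_code n B. w j' = 1 \<and> (\<forall>k\<in>F. k \<noteq> j' \<longrightarrow> w k = 0)"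
  proof
    fix j' assume "j' \<in> F"
    then obtain w where "w \<in> dual_code n B" "w j' = 1" "\<forall>k\<in>insert j F. k \<noteq> j' \<longrightarrow> w k = 0"
      using clearing by blast
    thus "\<exists>w\<in>dual_code n B. w j' = 1 \<and> (\<forall>k\<in>F. k \<noteq> j' \<longrightarrow> w k = 0)" by blast
  qed
  moreover have "\<forall>j\<in>F. red2 (y j) = 0" using insert.prems(3) by simp
  ultimately obtain y1 where y1: "y1 \<in> C" "\<forall>i. red2 (y1 i) = red2 (y i)" "\<forall>k\<in>F. y1 k = 0"
    using insert.IH insert.prems(2) by blast
  obtain w where w: "w \<in> dual_code n B" "w j = 1" "\<forall>k\<in>insert j F. k \<noteq> j \<longrightarrow> w k = 0"
    using clearing by blast
  have "red2 (y1 j) = 0" using y1(2) insert.prems(3) by simp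
  hence "y1 j = 0 \<or> y1 j = 2" unfolding red2_eq_0_iff .
  thus ?case
  proof
    assume "y1 j = 0" thus ?case using y1 by auto
  next
    assume y1j: "y1 j = 2"
    have "z4_code n C" using sd unfolding self_dual_z4_def by simp
    hence "(\<lambda>i. y1 i + twice w i) \<in> C"
      using y1(1) twice_dual_in_code[OF sd res w(1)] unfolding z4_code_def by blast
    moreover have "\<forall>i. red2 (y1 i + twice w i) = red2 (y i)" using y1(2) red2_add_twice by simp
    moreover have "\<forall>k\<in>insert j F. y1 k + twice w k = 0"
      using y1(3) w(2,3) y1j insert.hyps(2) by (auto simp: twice_def)
    ultimately show ?case by (intro bexI[where x = "\<lambda>i. y1 i + twice w i"]) auto
  qed
qed

lemma eucl_wt_le:
  assumes red: "\<forall>i. red2 (y i) = v i" and twos: "{i \<in> {1..n}. y i = 2} \<subseteq> S" and "finite S"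
  shows "eucl_wt n y \<le> ham_wt n v + 4 * card S"
proof -
  let ?A1 = "{i \<in> {1..n}. y i = 1}" and ?A3 = "{i \<in> {1..n}. y i = 3}"
  have "v i = red2 (y i)" for i using red by simp
  hence "?A1 \<union> ?A3 \<subseteq> supp n v" unfolding supp_def by auto
  hence "card (?A1 \<union> ?A3) \<le> ham_wt n v"
    unfolding ham_wt_supp by (intro card_mono) (auto simp: supp_def)
  moreover have "card (?A1 \<union> ?A3) = card ?A1 + card ?A3" by (rule card_Un_disjoint) auto
  moreover have "n_count n y 2 \<le> card S" unfolding n_count_def using twos assms(3) by (rule card_mono[rotated])
  ultimately show ?thesis unfolding eucl_wt_def n_count_def by linarith
qed

lemma min_eucl_wt_le:
  assumes "x \<in> C" "x \<noteq> (\<lambda>i. 0)"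
  shows "min_eucl_wt n C \<le> eucl_wt n x"
proof -
  have cnt: "n_count n z a \<le> n" for z a
  proof -
    have "n_count n z a \<le> card {1..n}" unfolding n_count_def by (rule card_mono) auto
    thus ?thesis by simp
  qed
  have "eucl_wt n z \<le> 6 * n" for z
    unfolding eucl_wt_def using cnt[of z 1] cnt[of z 2] cnt[of z 3] by linarith
  hence "{eucl_wt n x |x. x \<in> C \<and> x \<noteq> (\<lambda>i. 0)} \<subseteq> {..6 * n}" by auto
  hence "finite {eucl_wt n x |x. x \<in> C \<and> x \<noteq> (\<lambda>i. 0)}" by (rule finite_subset) simp
  thus ?thesis unfolding min_eucl_wt_def using assms by (intro Min_le) auto
qed

section \<open>Non-extremality of Type II codes with residue N32\<close>

text \<open>The coordinates outside supp(v32) and 6, and for each such j a dual word of N32 that is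
  1 at j and 0 at the other coordinates of the list (given by its support).\<close>
definition clear_coords :: "nat list" where
  "clear_coords = [7,8,10,11,12,13,14,15,16,18,19,20,21,22,23,24,25,26,27,28,30,31,32]"

definition clearing_table :: "(nat \<times> nat list) list" where
  "clearing_table = [(7, [1, 4, 6, 7]), (8, [1, 3, 6, 8]), (10, [5, 6, 9, 10]), (11, [1, 4, 5, 6, 9, 11]),
   (12, [1, 3, 5, 6, 9, 12]), (13, [2, 6, 9, 13]), (14, [1, 6, 9, 14]), (15, [4, 6, 9, 15]),
   (16, [3, 6, 9, 16]), (18, [5, 6, 17, 18]), (19, [1, 4, 5, 6, 17, 19]), (20, [1, 3, 5, 6, 17, 20]),
   (21, [2, 6, 17, 21]), (22, [1, 6, 17, 22]), (23, [4, 6, 17, 23]), (24, [3, 6, 17, 24]),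
   (25, [2, 6, 25, 29]), (26, [1, 6, 26, 29]), (27, [4, 6, 27, 29]), (28, [3, 6, 28, 29]),
   (30, [5, 6, 29, 30]), (31, [1, 4, 5, 6, 29, 31]), (32, [1, 3, 5, 6, 29, 32])]"

lemma clearing_table_coords: "map fst clearing_table = clear_coords"
  unfolding clearing_table_def clear_coords_def by simp

lemma clearing_table_valid:
  "list_all (\<lambda>(j,S). (\<forall>g\<in>N32_gens. dotp 32 g (ind32 (\<lambda>i. i \<in> set S)) = 0) \<and> j \<in> set S
    \<and> list_all (\<lambda>k. k = j \<or> k \<notin> set S) clear_coords) clearing_table"
  unfolding clearing_table_def clear_coords_def N32_gens_def by (simp add: generator_eval upt_rec)

lemma N32_clearing_words:
  "\<forall>j\<in>set clear_coords. \<exists>w\<in>dual_code 32 N32. w j = 1 \<and> (\<forall>k\<in>set clear_coords. k \<noteq> j \<longrightarrow> w k = 0)"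
proof
  fix j assume j: "j \<in> set clear_coords"
  then obtain S where S: "(j, S) \<in> set clearing_table"
    unfolding clearing_table_coords[symmetric] by auto
  let ?w = "ind32 (\<lambda>i. i \<in> set S)"
  have ok: "(\<forall>g\<in>N32_gens. dotp 32 g ?w = 0) \<and> j \<in> set S \<and> (\<forall>k\<in>set clear_coords. k = j \<or> k \<notin> set S)"
    using clearing_table_valid S unfolding list_all_iff by fastforce
  have "j \<in> {1..32}" using j unfolding clear_coords_def by auto
  hence "?w j = 1" using ok unfolding ind32_def by auto
  moreover have "\<forall>k\<in>set clear_coords. k \<noteq> j \<longrightarrow> ?w k = 0" using ok unfolding ind32_def by auto
  moreover have "?w \<in> dual_code 32 N32"
    unfolding dual_code_def N32_eq using orth_bin_gen ok ind32_vecs by blast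
  ultimately show "\<exists>w\<in>dual_code 32 N32. w j = 1 \<and> (\<forall>k\<in>set clear_coords. k \<noteq> j \<longrightarrow> w k = 0)"
    by blast
qed

lemma v32_facts:
  "ham_wt 32 v32 = 8" "v32 1 = 1" "\<forall>j\<in>set clear_coords. v32 j = 0"
  "\<forall>i\<in>{1..32}. i \<in> set clear_coords \<or> i = 6 \<or> v32 i = 1"
proof -
  have "\<forall>i\<in>set [1..<33]. i \<in> set clear_coords \<or> i = 6 \<or> v32 i = 1"
    unfolding clear_coords_def v32_def ind32_def by (simp add: upt_rec)
  thus "\<forall>i\<in>{1..32}. i \<in> set clear_coords \<or> i = 6 \<or> v32 i = 1" by simp
qed (simp_all add: v32_def ind32_def ham_wt_ind32 clear_coords_def upt_rec)

text \<open>Key step: a self-dual code with residue N32 contains a nonzero word of Euclidean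
  weight at most 12, namely a lift of v32 cleared on clear_coords.\<close>
lemma short_codeword:
  assumes sd: "self_dual_z4 32 C" and res: "residue_code C = N32"
  shows "\<exists>y\<in>C. y \<noteq> (\<lambda>i. 0) \<and> eucl_wt 32 y \<le> 12"
proof -
  have "v32 \<in> residue_code C" using res N32_gens_in_N32 by (simp add: N32_gens_def)
  then obtain x where x: "x \<in> C" and lift: "v32 = (\<lambda>i. red2 (x i))"
    unfolding residue_code_def by blast
  obtain y where y: "y \<in> C" "\<forall>i. red2 (y i) = v32 i" "\<forall>j\<in>set clear_coords. y j = 0"
    using clear_coordinates[OF sd _ _ N32_clearing_words x] res v32_facts(3) unfolding lift by auto
  have "{i \<in> {1..32}. y i = 2} \<subseteq> {6}"
  proof
    fix i assume "i \<in> {i \<in> {1..32}. y i = 2}"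
    hence i: "i \<in> {1..32}" "y i = 2" by auto
    have "v32 i = 0" using y(2) i(2) by (metis red2_simps(3))
    moreover have "i \<notin> set clear_coords" using y(3) i(2) by force
    ultimately show "i \<in> {6}" using v32_facts(4) i(1) by force
  qed
  hence "eucl_wt 32 y \<le> ham_wt 32 v32 + 4 * card {6::nat}" by (rule eucl_wt_le[OF y(2)]) simp
  hence "eucl_wt 32 y \<le> 12" using v32_facts(1) by simp
  moreover have "red2 (y 1) = 1" using y(2) v32_facts(2) by simp
  hence "y \<noteq> (\<lambda>i. 0)" by auto
  ultimately show ?thesis using y(1) by blast
qed

theorem mainTheorem9:
  shows "N32 \<subseteq> vecs 32 \<and> card N32 = 2 ^ 7
     \<and> doubly_even 32 N32
     \<and> ind32 (\<lambda>i. True) \<in> N32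
     \<and> (\<forall>y \<in> dual_code 32 N32. y \<noteq> (\<lambda>i. 0) \<longrightarrow> ham_wt 32 y \<ge> 4)
     \<and> \<not> (\<exists>C. type_II 32 C \<and> residue_code C = N32 \<and> extremal_type_II 32 C)"
proof -
  have "\<not> extremal_type_II 32 C" if t2: "type_II 32 C" and res: "residue_code C = N32" for C
  proof -
    have "self_dual_z4 32 C" using t2 unfolding type_II_def by simp
    then obtain y where "y \<in> C" "y \<noteq> (\<lambda>i. 0)" "eucl_wt 32 y \<le> 12"
      using short_codeword res by blast
    hence "min_eucl_wt 32 C \<le> 12" using min_eucl_wt_le order_trans by blast
    thus ?thesis unfolding extremal_type_II_def by simp
  qed
  thus ?thesis
    using N32_vecs card_N32 doubly_even_N32 all_ones_N32 dual_N32_min_wt by blast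
qed

end
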